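(* Let $(P,\omega)$ be a labeled poset of size $p$ and let $s\in P$. Then, as formal power series in $q$, $$G_{P,\omega;s}(q)=\frac{e_q^{\mathrm{maj}}(P,\omega;s)}{\prod_{i=1}^{p}(1-q^i)}.$$
   Context: $\mathbb{N}=\{0,1,2,\dots\}$; $\omega:P\to[p]$ is a bijection. A $(P,\omega)$-partition is a map $f:P\to\mathbb{N}$ with $f(x)\ge f(y)$ whenever $x\le y$, and $f(x)>f(y)$ whenever $x\le y$ and $\omega(x)>\omega(y)$. A $(P,\omega;s)$-partition is a $(P,\omega)$-partition $f$ with $f(s)\le f(t)$ for all $t\in P$ and such that $f(s)=f(t)$, $t\ne s$, implies $\omega(s)>\omega(t)$. $G_{P,\omega;s}(q)=\sum_{m\ge0}a(m)q^m$, where $a(m)$ is the number of $(P,\omega;s)$-partitions $f$ with $\sum_{t\in P}f(t)=m$. For a linear extension (order-preserving bijection) $g:P\to[p]$, its word is $\sigma=\omega\circ g^{-1}=\sigma_1\cdots\sigma_p$, and $\mathrm{maj}(\sigma)=\sum_{i:\sigma_i>\sigma_{i+1}}i$. $e_q^{\mathrm{maj}}(P,\omega;s)=\sum q^{\mathrm{maj}(\sigma)}$, summed over words $\sigma$ of linear extensions with $\sigma_p=\omega(s)$. *)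

theory Defs
  imports "HOL-Computational_Algebra.Formal_Power_Series"
begin

definition labeled_poset :: "('a \<Rightarrow> 'a \<Rightarrow> bool) \<Rightarrow> 'a set \<Rightarrow> ('a \<Rightarrow> nat) \<Rightarrow> bool" where
  "labeled_poset le P \<omega> \<longleftrightarrow> finite P
     \<and> (\<forall>x\<in>P. le x x)
     \<and> (\<forall>x\<in>P. \<forall>y\<in>P. le x y \<and> le y x \<longrightarrow> x = y)
     \<and> (\<forall>x\<in>P. \<forall>y\<in>P. \<forall>z\<in>P. le x y \<and> le y z \<longrightarrow> le x z)
     \<and> bij_betw \<omega> P {1..card P}"

definition P_omega_partition :: "('a \<Rightarrow> 'a \<Rightarrow> bool) \<Rightarrow> 'a set \<Rightarrow> ('a \<Rightarrow> nat) \<Rightarrow> ('a \<Rightarrow> nat) \<Rightarrow> bool" where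
  "P_omega_partition le P \<omega> f \<longleftrightarrow>
     (\<forall>x. x \<notin> P \<longrightarrow> f x = 0)
     \<and> (\<forall>x\<in>P. \<forall>y\<in>P. le x y \<longrightarrow> f x \<ge> f y)
     \<and> (\<forall>x\<in>P. \<forall>y\<in>P. le x y \<and> \<omega> x > \<omega> y \<longrightarrow> f x > f y)"

definition P_omega_s_partition :: "('a \<Rightarrow> 'a \<Rightarrow> bool) \<Rightarrow> 'a set \<Rightarrow> ('a \<Rightarrow> nat) \<Rightarrow> 'a \<Rightarrow> ('a \<Rightarrow> nat) \<Rightarrow> bool" where
  "P_omega_s_partition le P \<omega> s f \<longleftrightarrow>
     P_omega_partition le P \<omega> f
     \<and> (\<forall>t\<in>P. f s \<le> f t)
     \<and> (\<forall>t\<in>P. f s = f t \<and> t \<noteq> s \<longrightarrow> \<omega> s > \<omega> t)"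

definition G_fps :: "('a \<Rightarrow> 'a \<Rightarrow> bool) \<Rightarrow> 'a set \<Rightarrow> ('a \<Rightarrow> nat) \<Rightarrow> 'a \<Rightarrow> rat fps" where
  "G_fps le P \<omega> s = Abs_fps (\<lambda>m. of_nat (card
      {f. P_omega_s_partition le P \<omega> s f \<and> (\<Sum>t\<in>P. f t) = m}))"

definition linear_extension :: "('a \<Rightarrow> 'a \<Rightarrow> bool) \<Rightarrow> 'a set \<Rightarrow> ('a \<Rightarrow> nat) \<Rightarrow> bool" where
  "linear_extension le P g \<longleftrightarrow>
     (\<forall>x. x \<notin> P \<longrightarrow> g x = 0)
     \<and> bij_betw g P {1..card P}
     \<and> (\<forall>x\<in>P. \<forall>y\<in>P. le x y \<longrightarrow> g x \<le> g y)"

definition word :: "'a set \<Rightarrow> ('a \<Rightarrow> nat) \<Rightarrow> ('a \<Rightarrow> nat) \<Rightarrow> nat \<Rightarrow> nat" where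
  "word P \<omega> g i = \<omega> (inv_into P g i)"

definition maj :: "nat \<Rightarrow> (nat \<Rightarrow> nat) \<Rightarrow> nat" where
  "maj p \<sigma> = (\<Sum>i\<in>{i\<in>{1..<p}. \<sigma> i > \<sigma> (Suc i)}. i)"

text \<open>e_q^maj(P,omega;s): sum over words of linear extensions with sigma_p = omega(s).
  Distinct linear extensions give distinct words, so we sum over the set of words.\<close>
definition e_maj :: "('a \<Rightarrow> 'a \<Rightarrow> bool) \<Rightarrow> 'a set \<Rightarrow> ('a \<Rightarrow> nat) \<Rightarrow> 'a \<Rightarrow> rat fps" where
  "e_maj le P \<omega> s = (\<Sum>\<sigma>\<in>{\<sigma>. \<exists>g. linear_extension le P g \<and> \<sigma> = word P \<omega> g}
       \<inter> {\<sigma>. \<sigma> (card P) = \<omega> s}. fps_X ^ maj (card P) \<sigma>)"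

end

theory Submission
  imports Defs
begin

(* Sorting P by decreasing value of f, ties broken by increasing label, turns a
   (P,omega)-partition f into the unique linear extension g with which f is compatible; the extra
   conditions on s say exactly that s comes last, i.e. sigma_p = omega(s). Read along g, the
   functions compatible with g are the sequences h_1 >= ... >= h_p >= 0 that drop strictly at
   every descent of sigma; splitting on whether h_p vanishes, and otherwise lowering every entry
   by one, shows that their generating function is q^maj(sigma) / ((1-q)...(1-q^p)). *)

unbundle fps_syntax

lemma transp_stepwise_less:
  assumes "transp R" and "\<And>k. i \<le> k \<Longrightarrow> k < j \<Longrightarrow> R k (Suc k)" and "i < j"
  shows "R i j"
proof -
  have "Suc i \<le> j" using \<open>i < j\<close> by simp
  then show ?thesis
  proof (induction j rule: dec_induct)
    case base
    show ?case using assms(2,3) by simp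
  next
    case (step k)
    then have "R k (Suc k)" using assms(2) by simp
    with step.IH show ?case using assms(1) by (meson transpD)
  qed
qed

lemma finite_nat_funs_with_sum:
  assumes "finite A"
  shows "finite {f :: 'a \<Rightarrow> nat. (\<forall>x. x \<notin> A \<longrightarrow> f x = 0) \<and> sum f A = m}"
proof (rule finite_subset)
  show "finite {f. \<forall>x. (x \<in> A \<longrightarrow> f x \<in> {..m}) \<and> (x \<notin> A \<longrightarrow> f x = (0::nat))}"
    using assms by (intro finite_set_of_finite_funs) auto
  show "{f :: 'a \<Rightarrow> nat. (\<forall>x. x \<notin> A \<longrightarrow> f x = 0) \<and> sum f A = m}
      \<subseteq> {f. \<forall>x. (x \<in> A \<longrightarrow> f x \<in> {..m}) \<and> (x \<notin> A \<longrightarrow> f x = 0)}"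
    using member_le_sum[of _ A _, OF _ _ assms] by auto
qed

definition rank :: "('a \<Rightarrow> 'a \<Rightarrow> bool) \<Rightarrow> 'a set \<Rightarrow> 'a \<Rightarrow> nat" where
  "rank r A x = Suc (card {y \<in> A. r y x})"

lemma rank_strict_mono:
  assumes "finite A" "transp_on A r" "irreflp_on A r" "x \<in> A" "y \<in> A" "r x y"
  shows "rank r A x < rank r A y"
proof -
  have "{z \<in> A. r z x} \<subset> {z \<in> A. r z y}"
    using assms(2-6) by (auto dest: transp_onD irreflp_onD)
  then show ?thesis
    unfolding rank_def using assms(1) by (simp add: psubset_card_mono)
qed

lemma bij_betw_rank:
  assumes "finite A" "transp_on A r" "irreflp_on A r" "totalp_on A r"
  shows "bij_betw (rank r A) A {1..card A}"
proof -
  have "inj_on (rank r A) A"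
  proof (rule inj_onI, rule ccontr)
    fix x y assume xy: "x \<in> A" "y \<in> A" "rank r A x = rank r A y" "x \<noteq> y"
    then have "r x y \<or> r y x" using totalp_onD[OF assms(4)] by blast
    then show False
      using xy rank_strict_mono[OF assms(1-3)] by fastforce
  qed
  moreover have "rank r A ` A \<subseteq> {1..card A}"
  proof
    fix k assume "k \<in> rank r A ` A"
    then obtain x where x: "x \<in> A" "k = rank r A x" by blast
    have "{y \<in> A. r y x} \<subseteq> A - {x}" using x(1) assms(3) by (auto dest: irreflp_onD)
    then have "card {y \<in> A. r y x} \<le> card (A - {x})"
      using assms(1) by (intro card_mono) auto
    also have "\<dots> < card A" by (rule card_Diff1_less[OF assms(1) x(1)])
    finally show "k \<in> {1..card A}" using x(2) unfolding rank_def by simp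
  qed
  ultimately show ?thesis
    by (simp add: bij_betw_def card_image card_subset_eq)
qed

lemma rank_less_of_bij:
  assumes g: "bij_betw g A {1..card A}" and x: "x \<in> A"
  shows "rank (\<lambda>y z. g y < g z) A x = g x"
proof -
  have gx: "g x \<in> {1..card A}" using bij_betwE[OF g] x by blast
  have "g ` {y \<in> A. g y < g x} = {1..<g x}"
  proof (intro equalityI subsetI)
    fix k assume "k \<in> g ` {y \<in> A. g y < g x}"
    then show "k \<in> {1..<g x}" using bij_betwE[OF g] by fastforce
  next
    fix k assume k: "k \<in> {1..<g x}"
    then have "k \<in> g ` A" using gx bij_betw_imp_surj_on[OF g] by auto
    then show "k \<in> g ` {y \<in> A. g y < g x}" using k by auto
  qed
  moreover have "inj_on g {y \<in> A. g y < g x}"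
    using bij_betw_imp_inj_on[OF g] by (rule inj_on_subset) blast
  ultimately have "card {y \<in> A. g y < g x} = card {1..<g x}"
    by (metis card_image)
  then show ?thesis using gx unfolding rank_def by simp
qed

section \<open>Decreasing sequences with prescribed strict descents\<close>

(* As h (q + 1) = 0, the condition at i = q makes q \<in> D force h q > 0. *)
definition decr_seqs :: "nat \<Rightarrow> nat set \<Rightarrow> nat \<Rightarrow> (nat \<Rightarrow> nat) set" where
  "decr_seqs q D m = {h. (\<forall>i. i \<notin> {1..q} \<longrightarrow> h i = 0)
     \<and> (\<forall>i\<in>{1..q}. h (Suc i) \<le> h i \<and> (i \<in> D \<longrightarrow> h (Suc i) < h i))
     \<and> sum h {1..q} = m}"

definition decr_seqs_fps :: "nat \<Rightarrow> nat set \<Rightarrow> 'a::comm_ring_1 fps" where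
  "decr_seqs_fps q D = Abs_fps (\<lambda>m. of_nat (card (decr_seqs q D m)))"

definition succ_seq :: "nat \<Rightarrow> (nat \<Rightarrow> nat) \<Rightarrow> nat \<Rightarrow> nat" where
  "succ_seq q h i = (if i \<in> {1..q} then Suc (h i) else 0)"

lemma finite_decr_seqs: "finite (decr_seqs q D m)"
  by (rule finite_subset[OF _ finite_nat_funs_with_sum[of "{1..q}" m]])
    (auto simp: decr_seqs_def)

lemma decr_seqs_antimono:
  assumes h: "h \<in> decr_seqs q D m" and "1 \<le> i" "i \<le> j" "j \<le> q"
  shows "h j \<le> h i"
proof (cases "i = j")
  case False
  have step: "h (Suc k) \<le> h k" if "i \<le> k" "k < j" for k
  proof -
    have "k \<in> {1..q}" using that assms(2,4) by simp
    then show ?thesis using h unfolding decr_seqs_def by blast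
  qed
  have "transp (\<lambda>i j. h j \<le> (h i :: nat))" by (rule transpI) simp
  from transp_stepwise_less[OF this step] show ?thesis using False assms(3) by simp
qed simp

lemma sum_succ_seq: "sum (succ_seq q h) {1..q} = sum h {1..q} + q"
proof -
  have "sum (succ_seq q h) {1..q} = (\<Sum>i=1..q. h i + 1)"
    unfolding succ_seq_def by (rule sum.cong) auto
  also have "\<dots> = sum h {1..q} + (\<Sum>i=1..q. 1)" by (rule sum.distrib)
  finally show ?thesis by simp
qed

lemma decr_seqs_last_zero:
  assumes "D \<subseteq> {1..p}"
  shows "{h \<in> decr_seqs (Suc p) D m. h (Suc p) = 0} = decr_seqs p D m"
proof -
  have "h \<in> decr_seqs (Suc p) D m \<and> h (Suc p) = 0 \<longleftrightarrow> h \<in> decr_seqs p D m" for h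
  proof -
    have "(\<forall>i. i \<notin> {1..Suc p} \<longrightarrow> h i = 0) \<and> h (Suc p) = 0 \<longleftrightarrow> (\<forall>i. i \<notin> {1..p} \<longrightarrow> h i = 0)"
      by (metis atLeastAtMost_iff le_Suc_eq not_less_eq_eq)
    moreover have "sum h {1..Suc p} = sum h {1..p} + h (Suc p)" by simp
    moreover have "Suc p \<notin> D" using assms by auto
    ultimately show ?thesis
      unfolding decr_seqs_def by (auto simp: le_Suc_eq)
  qed
  then show ?thesis by blast
qed

lemma decr_seqs_last_pos:
  assumes "0 < q"
  shows "{h \<in> decr_seqs q D m. 0 < h q}
    = (if q \<le> m then succ_seq q ` decr_seqs q (D - {q}) (m - q) else {})"
proof (intro equalityI subsetI)
  fix h assume h: "h \<in> {h \<in> decr_seqs q D m. 0 < h q}"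
  have pos: "0 < h i" if "i \<in> {1..q}" for i
    using h decr_seqs_antimono[of h q D m i q] that by fastforce
  define h' where "h' i = (if i \<in> {1..q} then h i - 1 else 0)" for i
  have "h = succ_seq q h'"
    using h pos unfolding succ_seq_def h'_def decr_seqs_def by fastforce
  moreover have "sum h {1..q} = m" using h unfolding decr_seqs_def by blast
  ultimately have sum_h': "sum h' {1..q} + q = m" by (metis sum_succ_seq)
  have "h' (Suc i) \<le> h' i \<and> (i \<in> D - {q} \<longrightarrow> h' (Suc i) < h' i)" if i: "i \<in> {1..q}" for i
  proof -
    have "h (Suc i) \<le> h i \<and> (i \<in> D \<longrightarrow> h (Suc i) < h i)"
      using h i unfolding decr_seqs_def by blast
    moreover have "0 < h (Suc i)" if "i \<noteq> q" using pos that i by simp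
    ultimately show ?thesis using i unfolding h'_def by auto
  qed
  then have "h' \<in> decr_seqs q (D - {q}) (m - q)"
    using sum_h' unfolding decr_seqs_def by (auto simp: h'_def)
  then show "h \<in> (if q \<le> m then succ_seq q ` decr_seqs q (D - {q}) (m - q) else {})"
    using \<open>h = succ_seq q h'\<close> sum_h' by auto
next
  fix h assume "h \<in> (if q \<le> m then succ_seq q ` decr_seqs q (D - {q}) (m - q) else {})"
  then obtain h' where "q \<le> m" and h': "h' \<in> decr_seqs q (D - {q}) (m - q)" and hh: "h = succ_seq q h'"
    by (auto split: if_splits)
  have "h (Suc i) \<le> h i \<and> (i \<in> D \<longrightarrow> h (Suc i) < h i)" if i: "i \<in> {1..q}" for i
  proof (cases "i = q")
    case False
    then have "Suc i \<in> {1..q}" using i by auto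
    then show ?thesis using h' i False unfolding hh succ_seq_def decr_seqs_def by auto
  qed (use assms in \<open>simp add: hh succ_seq_def\<close>)
  moreover have "sum h {1..q} = m"
    using h' \<open>q \<le> m\<close> unfolding hh sum_succ_seq decr_seqs_def by simp
  ultimately show "h \<in> {h \<in> decr_seqs q D m. 0 < h q}"
    using assms unfolding decr_seqs_def hh by (simp add: succ_seq_def)
qed

lemma inj_succ_seq: "inj_on (succ_seq q) (decr_seqs q D m)"
proof (rule inj_onI, rule ext)
  fix h h' i assume h: "h \<in> decr_seqs q D m" "h' \<in> decr_seqs q D m"
    and eq: "succ_seq q h = succ_seq q h'"
  show "h i = h' i"
  proof (cases "i \<in> {1..q}")
    case True
    then show ?thesis using fun_cong[OF eq, of i] by (simp add: succ_seq_def)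
  qed (use h in \<open>simp add: decr_seqs_def\<close>)
qed

lemma decr_seqs_fps_Suc:
  assumes "D \<subseteq> {1..Suc p}"
  shows "(decr_seqs_fps (Suc p) D :: 'a::comm_ring_1 fps)
    = (if Suc p \<in> D then 0 else decr_seqs_fps p D) + fps_X ^ Suc p * decr_seqs_fps (Suc p) (D - {Suc p})"
proof (rule fps_ext)
  fix m
  let ?q = "Suc p"
  let ?Z = "{h \<in> decr_seqs ?q D m. h ?q = 0}" and ?N = "{h \<in> decr_seqs ?q D m. 0 < h ?q}"
  have "card ?Z + card ?N = card (?Z \<union> ?N)"
    using finite_decr_seqs by (intro card_Un_disjoint[symmetric]) auto
  also have "?Z \<union> ?N = decr_seqs ?q D m" by auto
  finally have "card (decr_seqs ?q D m) = card ?Z + card ?N" by simp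
  moreover have "?Z = (if ?q \<in> D then {} else decr_seqs p D m)"
  proof (cases "?q \<in> D")
    case False
    then have "D \<subseteq> {1..p}" using assms by (auto simp: le_Suc_eq)
    then show ?thesis using False decr_seqs_last_zero by simp
  qed (auto simp: decr_seqs_def)
  moreover have "card ?N = (if ?q \<le> m then card (decr_seqs ?q (D - {?q}) (m - ?q)) else 0)"
    by (simp add: decr_seqs_last_pos card_image[OF inj_succ_seq])
  ultimately show "decr_seqs_fps ?q D $ m
      = ((if ?q \<in> D then 0 else decr_seqs_fps p D) + fps_X ^ ?q * decr_seqs_fps ?q (D - {?q}) :: 'a fps) $ m"
    unfolding decr_seqs_fps_def by (simp add: fps_X_power_mult_nth not_less del: power_Suc)
qed

lemma decr_seqs_fps_Suc_notin:
  assumes "D \<subseteq> {1..p}"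
  shows "decr_seqs_fps (Suc p) D * (1 - fps_X ^ Suc p) = (decr_seqs_fps p D :: 'a::comm_ring_1 fps)"
proof -
  have "D \<subseteq> {1..Suc p}" "Suc p \<notin> D" "D - {Suc p} = D" using assms by auto
  then have "decr_seqs_fps (Suc p) D = decr_seqs_fps p D + fps_X ^ Suc p * (decr_seqs_fps (Suc p) D :: 'a fps)"
    using decr_seqs_fps_Suc[of D p] by simp
  then show ?thesis by (simp add: algebra_simps)
qed

lemma decr_seqs_fps_0: "decr_seqs_fps 0 {} = 1"
proof (rule fps_ext)
  fix m
  have "h \<in> decr_seqs 0 {} m \<longleftrightarrow> h = (\<lambda>_. 0) \<and> m = 0" for h
    unfolding decr_seqs_def by auto
  then have "decr_seqs 0 {} m = (if m = 0 then {\<lambda>_. 0} else {})" by auto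
  then show "decr_seqs_fps 0 {} $ m = 1 $ m" by (simp add: decr_seqs_fps_def)
qed

lemma decr_seqs_fps_times_prod:
  assumes "D \<subseteq> {1..q}"
  shows "decr_seqs_fps q D * (\<Prod>i=1..q. 1 - fps_X ^ i) = (fps_X ^ \<Sum>D :: 'a::comm_ring_1 fps)"
  using assms
proof (induction q arbitrary: D)
  case 0
  then show ?case by (simp add: decr_seqs_fps_0)
next
  case (Suc p)
  have prod_Suc: "(\<Prod>i=1..Suc p. 1 - fps_X ^ i) = (\<Prod>i=1..p. 1 - fps_X ^ i) * (1 - fps_X ^ Suc p :: 'a fps)"
    by (simp add: prod.cl_ivl_Suc)
  have without_last: "decr_seqs_fps (Suc p) E * (\<Prod>i=1..Suc p. 1 - fps_X ^ i) = (fps_X ^ \<Sum>E :: 'a fps)"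
    if E: "E \<subseteq> {1..p}" for E
  proof -
    have "decr_seqs_fps (Suc p) E * (\<Prod>i=1..Suc p. 1 - fps_X ^ i)
        = decr_seqs_fps (Suc p) E * (1 - fps_X ^ Suc p) * (\<Prod>i=1..p. 1 - fps_X ^ i :: 'a fps)"
      unfolding prod_Suc by (simp only: mult_ac)
    also have "\<dots> = fps_X ^ \<Sum>E" unfolding decr_seqs_fps_Suc_notin[OF E] by (rule Suc.IH[OF E])
    finally show ?thesis .
  qed
  show ?case
  proof (cases "Suc p \<in> D")
    case False
    then have "D \<subseteq> {1..p}" using Suc.prems by (auto simp: le_Suc_eq)
    then show ?thesis by (rule without_last)
  next
    case True
    have D': "D - {Suc p} \<subseteq> {1..p}" using Suc.prems by (auto simp: le_Suc_eq)
    have "finite D" by (rule finite_subset[OF Suc.prems]) simp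
    then have sum_D: "\<Sum>D = Suc p + \<Sum>(D - {Suc p})" using True by (rule sum.remove)
    have "decr_seqs_fps (Suc p) D = fps_X ^ Suc p * (decr_seqs_fps (Suc p) (D - {Suc p}) :: 'a fps)"
      using decr_seqs_fps_Suc[OF Suc.prems] True by simp
    then have "decr_seqs_fps (Suc p) D * (\<Prod>i=1..Suc p. 1 - fps_X ^ i)
        = fps_X ^ Suc p * (decr_seqs_fps (Suc p) (D - {Suc p}) * (\<Prod>i=1..Suc p. 1 - fps_X ^ i) :: 'a fps)"
      by (simp only: mult.assoc)
    also have "\<dots> = fps_X ^ \<Sum>D" unfolding without_last[OF D'] sum_D by (rule power_add[symmetric])
    finally show ?thesis .
  qed
qed

section \<open>Partitions compatible with a linear extension\<close>

definition precedes :: "('a \<Rightarrow> nat) \<Rightarrow> ('a \<Rightarrow> nat) \<Rightarrow> 'a \<Rightarrow> 'a \<Rightarrow> bool" where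
  "precedes f \<omega> x y \<longleftrightarrow> f y < f x \<or> (f y = f x \<and> \<omega> x < \<omega> y)"

definition compatible :: "'a set \<Rightarrow> ('a \<Rightarrow> nat) \<Rightarrow> ('a \<Rightarrow> nat) \<Rightarrow> ('a \<Rightarrow> nat) \<Rightarrow> bool" where
  "compatible P \<omega> g f \<longleftrightarrow> (\<forall>x\<in>P. \<forall>y\<in>P. g x < g y \<longrightarrow> precedes f \<omega> x y)"

lemma transp_precedes: "transp (precedes f \<omega>)"
  by (rule transpI) (auto simp: precedes_def)

lemma precedes_asym: "precedes f \<omega> x y \<Longrightarrow> \<not> precedes f \<omega> y x"
  by (auto simp: precedes_def)

lemma totalp_on_precedes: "inj_on \<omega> A \<Longrightarrow> totalp_on A (precedes f \<omega>)"
proof (rule totalp_onI)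
  fix x y assume "inj_on \<omega> A" "x \<in> A" "y \<in> A" "x \<noteq> y"
  then have "\<omega> x \<noteq> \<omega> y" by (auto dest: inj_onD)
  then show "precedes f \<omega> x y \<or> precedes f \<omega> y x" unfolding precedes_def by linarith
qed

lemma precedes_iff:
  assumes "\<omega> x \<noteq> \<omega> y"
  shows "precedes f \<omega> x y \<longleftrightarrow> f y \<le> f x \<and> (\<omega> y < \<omega> x \<longrightarrow> f y < f x)"
  using assms by (auto simp: precedes_def)

lemma compatible_less_iff:
  assumes "inj_on g P" "compatible P \<omega> g f" "x \<in> P" "y \<in> P"
  shows "g x < g y \<longleftrightarrow> precedes f \<omega> x y"
proof
  assume "precedes f \<omega> x y"
  moreover have "x \<noteq> y" using calculation by (auto simp: precedes_def)
  then have "g x \<noteq> g y" using assms(1,3,4) by (auto dest: inj_onD)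
  ultimately show "g x < g y"
    using assms(2-4) precedes_asym unfolding compatible_def by (meson linorder_neqE_nat)
qed (use assms(2-4) in \<open>simp add: compatible_def\<close>)

lemma compatible_unique:
  assumes g1: "bij_betw g1 P {1..card P}" and g2: "bij_betw g2 P {1..card P}"
    and "compatible P \<omega> g1 f" "compatible P \<omega> g2 f" "x \<in> P"
  shows "g1 x = g2 x"
proof -
  have "{y \<in> P. g1 y < g1 x} = {y \<in> P. g2 y < g2 x}"
    using assms compatible_less_iff[OF bij_betw_imp_inj_on[OF g1]]
      compatible_less_iff[OF bij_betw_imp_inj_on[OF g2]] by blast
  then show ?thesis
    using rank_less_of_bij[OF g1 \<open>x \<in> P\<close>] rank_less_of_bij[OF g2 \<open>x \<in> P\<close>] by (simp add: rank_def)
qed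

lemma labeled_poset_finite: "labeled_poset le P \<omega> \<Longrightarrow> finite P"
  by (simp add: labeled_poset_def)

lemma labeled_poset_inj_on: "labeled_poset le P \<omega> \<Longrightarrow> inj_on \<omega> P"
  by (simp add: labeled_poset_def bij_betw_def)

lemma linear_extension_bij_betw: "linear_extension le P g \<Longrightarrow> bij_betw g P {1..card P}"
  by (simp add: linear_extension_def)

lemma strict_total_order_precedes:
  assumes "inj_on \<omega> P"
  shows "transp_on P (precedes f \<omega>)" "irreflp_on P (precedes f \<omega>)" "totalp_on P (precedes f \<omega>)"
proof -
  show "transp_on P (precedes f \<omega>)" using transp_precedes by (rule transp_on_subset) simp
  show "irreflp_on P (precedes f \<omega>)" by (rule irreflp_onI) (simp add: precedes_def)
  show "totalp_on P (precedes f \<omega>)" using assms by (rule totalp_on_precedes)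
qed

definition sorting_ext :: "'a set \<Rightarrow> ('a \<Rightarrow> nat) \<Rightarrow> ('a \<Rightarrow> nat) \<Rightarrow> 'a \<Rightarrow> nat" where
  "sorting_ext P \<omega> f x = (if x \<in> P then rank (precedes f \<omega>) P x else 0)"

lemma sorting_ext_less:
  assumes "finite P" "inj_on \<omega> P" "x \<in> P" "y \<in> P" "precedes f \<omega> x y"
  shows "sorting_ext P \<omega> f x < sorting_ext P \<omega> f y"
  using rank_strict_mono[OF assms(1) strict_total_order_precedes(1,2)[OF assms(2)] assms(3-5)] assms(3,4)
  by (simp add: sorting_ext_def)

lemma compatible_sorting_ext:
  assumes "finite P" "inj_on \<omega> P"
  shows "compatible P \<omega> (sorting_ext P \<omega> f) f"
  unfolding compatible_def
proof (intro ballI impI)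
  fix x y assume xy: "x \<in> P" "y \<in> P" "sorting_ext P \<omega> f x < sorting_ext P \<omega> f y"
  show "precedes f \<omega> x y"
  proof (rule ccontr)
    assume "\<not> precedes f \<omega> x y"
    moreover have "x \<noteq> y" using xy by auto
    ultimately have "precedes f \<omega> y x"
      using totalp_onD[OF strict_total_order_precedes(3)[OF assms(2)]] xy by blast
    then show False using sorting_ext_less[where f = f, OF assms xy(2,1)] xy(3) by simp
  qed
qed

lemma linear_extension_sorting_ext:
  assumes lp: "labeled_poset le P \<omega>" and f: "P_omega_partition le P \<omega> f"
  shows "linear_extension le P (sorting_ext P \<omega> f)"
  unfolding linear_extension_def
proof (intro conjI allI impI ballI)
  have fin: "finite P" and inj: "inj_on \<omega> P"
    using lp by (simp_all add: labeled_poset_finite labeled_poset_inj_on)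
  show "bij_betw (sorting_ext P \<omega> f) P {1..card P}"
    using bij_betw_rank[OF fin strict_total_order_precedes[OF inj]]
    by (rule bij_betw_cong[THEN iffD1, rotated]) (simp add: sorting_ext_def)
  fix x y assume xy: "x \<in> P" "y \<in> P" "le x y"
  show "sorting_ext P \<omega> f x \<le> sorting_ext P \<omega> f y"
  proof (cases "x = y")
    case False
    then have "\<omega> x \<noteq> \<omega> y" using inj xy by (auto dest: inj_onD)
    moreover have "f y \<le> f x \<and> (\<omega> y < \<omega> x \<longrightarrow> f y < f x)"
      using f xy unfolding P_omega_partition_def by blast
    ultimately have "precedes f \<omega> x y" by (simp add: precedes_iff)
    then show ?thesis using sorting_ext_less[where f = f, OF fin inj xy(1,2)] by simp
  qed simp
qed (simp add: sorting_ext_def)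

lemma sorting_ext_s_last:
  assumes "finite P" "s \<in> P" "P_omega_s_partition le P \<omega> s f"
  shows "sorting_ext P \<omega> f s = card P"
proof -
  have "precedes f \<omega> t s" if "t \<in> P" "t \<noteq> s" for t
  proof -
    have "f s \<le> f t" "f s = f t \<longrightarrow> \<omega> t < \<omega> s"
      using assms(3) that unfolding P_omega_s_partition_def by auto
    then show ?thesis unfolding precedes_def by auto
  qed
  then have "{t \<in> P. precedes f \<omega> t s} = P - {s}" by (auto simp: precedes_def)
  moreover have "0 < card P" using assms(1,2) card_gt_0_iff by blast
  ultimately show ?thesis using assms(1,2) by (simp add: sorting_ext_def rank_def)
qed

lemma s_partition_imp_compatible:
  assumes lp: "labeled_poset le P \<omega>" and s: "s \<in> P" and f: "P_omega_s_partition le P \<omega> s f"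
  shows "\<exists>g. linear_extension le P g \<and> g s = card P \<and> compatible P \<omega> g f"
proof (intro exI conjI)
  have fin: "finite P" and inj: "inj_on \<omega> P"
    using lp by (simp_all add: labeled_poset_finite labeled_poset_inj_on)
  show "linear_extension le P (sorting_ext P \<omega> f)"
    using f unfolding P_omega_s_partition_def by (blast intro: linear_extension_sorting_ext[OF lp])
  show "sorting_ext P \<omega> f s = card P" using fin s f by (rule sorting_ext_s_last)
  show "compatible P \<omega> (sorting_ext P \<omega> f) f" using fin inj by (rule compatible_sorting_ext)
qed

lemma compatible_imp_s_partition:
  assumes g: "linear_extension le P g" and s: "s \<in> P" "g s = card P"
    and compat: "compatible P \<omega> g f" and supp: "\<forall>x. x \<notin> P \<longrightarrow> f x = 0"
  shows "P_omega_s_partition le P \<omega> s f"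
proof -
  have inj: "inj_on g P" using bij_betw_imp_inj_on[OF linear_extension_bij_betw[OF g]] .
  have prec: "precedes f \<omega> x y" if "x \<in> P" "y \<in> P" "x \<noteq> y" "le x y" for x y
  proof -
    have "g x \<le> g y" "g x \<noteq> g y"
      using g that inj unfolding linear_extension_def by (auto dest: inj_onD)
    then show ?thesis using compat that unfolding compatible_def by simp
  qed
  have below_s: "precedes f \<omega> t s" if "t \<in> P" "t \<noteq> s" for t
  proof -
    have "g t \<in> {1..card P}" using bij_betwE[OF linear_extension_bij_betw[OF g]] that(1) by blast
    moreover have "g t \<noteq> g s" using inj that s(1) by (auto dest: inj_onD)
    ultimately show ?thesis using compat that s unfolding compatible_def by simp
  qed
  show ?thesis
    unfolding P_omega_s_partition_def P_omega_partition_def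
  proof (intro conjI ballI impI supp)
    fix x y assume "x \<in> P" "y \<in> P" "le x y"
    then show "f y \<le> f x" using prec[of x y] by (cases "x = y") (auto simp: precedes_def)
  next
    fix x y assume "x \<in> P" "y \<in> P" "le x y \<and> \<omega> y < \<omega> x"
    then show "f y < f x" using prec[of x y] by (cases "x = y") (auto simp: precedes_def)
  next
    fix t assume "t \<in> P"
    then show "f s \<le> f t" using below_s[of t] by (cases "t = s") (auto simp: precedes_def)
  next
    fix t assume "t \<in> P" "f s = f t \<and> t \<noteq> s"
    then show "\<omega> t < \<omega> s" using below_s[of t] by (auto simp: precedes_def)
  qed
qed

section \<open>Counting compatible partitions by descents\<close>

definition descents :: "nat \<Rightarrow> (nat \<Rightarrow> nat) \<Rightarrow> nat set" where
  "descents p \<sigma> = {i \<in> {1..<p}. \<sigma> (Suc i) < \<sigma> i}"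

lemma maj_eq_sum_descents: "maj p \<sigma> = \<Sum>(descents p \<sigma>)"
  by (simp add: maj_def descents_def)

definition seq_along :: "'a set \<Rightarrow> ('a \<Rightarrow> nat) \<Rightarrow> ('a \<Rightarrow> nat) \<Rightarrow> nat \<Rightarrow> nat" where
  "seq_along P g f i = (if i \<in> {1..card P} then f (inv_into P g i) else 0)"

definition compatible_funs :: "'a set \<Rightarrow> ('a \<Rightarrow> nat) \<Rightarrow> ('a \<Rightarrow> nat) \<Rightarrow> nat \<Rightarrow> ('a \<Rightarrow> nat) set" where
  "compatible_funs P \<omega> g m = {f. (\<forall>x. x \<notin> P \<longrightarrow> f x = 0) \<and> compatible P \<omega> g f \<and> sum f P = m}"

lemma compatible_iff_adjacent:
  assumes g: "bij_betw g P {1..card P}"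
  shows "compatible P \<omega> g f
    \<longleftrightarrow> (\<forall>i\<in>{1..<card P}. precedes f \<omega> (inv_into P g i) (inv_into P g (Suc i)))"
proof
  assume compat: "compatible P \<omega> g f"
  show "\<forall>i\<in>{1..<card P}. precedes f \<omega> (inv_into P g i) (inv_into P g (Suc i))"
  proof
    fix i assume "i \<in> {1..<card P}"
    then have i: "i \<in> {1..card P}" "Suc i \<in> {1..card P}" by auto
    have "inv_into P g i \<in> P" "inv_into P g (Suc i) \<in> P"
      using i bij_betw_apply[OF bij_betw_inv_into[OF g]] by blast+
    moreover have "g (inv_into P g i) < g (inv_into P g (Suc i))"
      using i by (simp add: bij_betw_inv_into_right[OF g])
    ultimately show "precedes f \<omega> (inv_into P g i) (inv_into P g (Suc i))"
      using compat unfolding compatible_def by blast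
  qed
next
  assume adj: "\<forall>i\<in>{1..<card P}. precedes f \<omega> (inv_into P g i) (inv_into P g (Suc i))"
  show "compatible P \<omega> g f"
    unfolding compatible_def
  proof (intro ballI impI)
    fix x y assume xy: "x \<in> P" "y \<in> P" "g x < g y"
    let ?R = "\<lambda>i j. precedes f \<omega> (inv_into P g i) (inv_into P g j)"
    have "transp ?R" using transp_precedes[of f \<omega>] unfolding transp_def by blast
    moreover have "?R k (Suc k)" if "g x \<le> k" "k < g y" for k
      using adj that bij_betwE[OF g] xy by force
    ultimately have "?R (g x) (g y)" using xy(3) by (rule transp_stepwise_less)
    then show "precedes f \<omega> x y" using xy by (simp add: bij_betw_inv_into_left[OF g])
  qed
qed

lemma sum_seq_along:
  assumes g: "bij_betw g P {1..card P}"
  shows "sum (seq_along P g f) {1..card P} = sum f P"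
proof -
  have "sum (seq_along P g f) {1..card P} = (\<Sum>i=1..card P. f (inv_into P g i))"
    by (rule sum.cong) (simp_all add: seq_along_def)
  also have "\<dots> = sum f P"
    by (rule sum.reindex_bij_betw[OF bij_betw_inv_into[OF g]])
  finally show ?thesis .
qed

lemma compatible_iff_seq_along:
  assumes inj: "inj_on \<omega> P" and g: "bij_betw g P {1..card P}"
  shows "compatible P \<omega> g f \<longleftrightarrow>
    (\<forall>i\<in>{1..card P}. seq_along P g f (Suc i) \<le> seq_along P g f i
       \<and> (i \<in> descents (card P) (word P \<omega> g) \<longrightarrow> seq_along P g f (Suc i) < seq_along P g f i))"
    (is "_ \<longleftrightarrow> (\<forall>i\<in>{1..card P}. ?C i)")
proof -
  let ?x = "inv_into P g"
  have adjacent: "?C i \<longleftrightarrow> precedes f \<omega> (?x i) (?x (Suc i))" if i: "i \<in> {1..<card P}" for i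
  proof -
    have x: "?x i \<in> P" "?x (Suc i) \<in> P" "g (?x i) = i" "g (?x (Suc i)) = Suc i"
      using i bij_betw_apply[OF bij_betw_inv_into[OF g]] bij_betw_inv_into_right[OF g] by auto
    then have "\<omega> (?x i) \<noteq> \<omega> (?x (Suc i))" using inj by (metis inj_onD n_not_Suc_n)
    then show ?thesis
      using i by (simp add: precedes_iff seq_along_def descents_def word_def)
  qed
  have last: "?C (card P)" by (simp add: seq_along_def descents_def)
  have "(\<forall>i\<in>{1..card P}. ?C i) \<longleftrightarrow> (\<forall>i\<in>{1..<card P}. ?C i)"
    using last by (auto simp: le_less)
  also have "\<dots> \<longleftrightarrow> compatible P \<omega> g f"
    using adjacent by (simp add: compatible_iff_adjacent[OF g])
  finally show ?thesis by simp
qed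

lemma bij_betw_seq_along:
  assumes inj: "inj_on \<omega> P" and g: "bij_betw g P {1..card P}"
  shows "bij_betw (seq_along P g) (compatible_funs P \<omega> g m)
    (decr_seqs (card P) (descents (card P) (word P \<omega> g)) m)"
proof -
  define fun_of where "fun_of h x = (if x \<in> P then h (g x) else 0)" for h :: "nat \<Rightarrow> nat" and x
  have seq_fun_of: "seq_along P g (fun_of h) = h" if "\<forall>i. i \<notin> {1..card P} \<longrightarrow> h i = 0" for h
  proof
    fix i show "seq_along P g (fun_of h) i = h i"
      using that bij_betw_apply[OF bij_betw_inv_into[OF g]] bij_betw_inv_into_right[OF g]
      by (auto simp: seq_along_def fun_of_def)
  qed
  show ?thesis
  proof (rule bij_betw_byWitness[where f' = fun_of])
    show "\<forall>f\<in>compatible_funs P \<omega> g m. fun_of (seq_along P g f) = f"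
    proof (intro ballI ext)
      fix f x assume "f \<in> compatible_funs P \<omega> g m"
      then show "fun_of (seq_along P g f) x = f x"
        using bij_betwE[OF g] bij_betw_inv_into_left[OF g]
        by (auto simp: seq_along_def fun_of_def compatible_funs_def)
    qed
    show "\<forall>h\<in>decr_seqs (card P) (descents (card P) (word P \<omega> g)) m. seq_along P g (fun_of h) = h"
      using seq_fun_of by (simp add: decr_seqs_def)
    show "seq_along P g ` compatible_funs P \<omega> g m
        \<subseteq> decr_seqs (card P) (descents (card P) (word P \<omega> g)) m"
      using compatible_iff_seq_along[OF inj g] sum_seq_along[OF g]
      by (auto simp: compatible_funs_def decr_seqs_def seq_along_def)
    show "fun_of ` decr_seqs (card P) (descents (card P) (word P \<omega> g)) m \<subseteq> compatible_funs P \<omega> g m"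
    proof
      fix f assume "f \<in> fun_of ` decr_seqs (card P) (descents (card P) (word P \<omega> g)) m"
      then obtain h where h: "h \<in> decr_seqs (card P) (descents (card P) (word P \<omega> g)) m"
        and f: "f = fun_of h" by blast
      have "seq_along P g f = h" using h seq_fun_of unfolding f decr_seqs_def by blast
      then show "f \<in> compatible_funs P \<omega> g m"
        using h compatible_iff_seq_along[OF inj g, of f] sum_seq_along[OF g, of f]
        by (auto simp: compatible_funs_def decr_seqs_def f fun_of_def)
    qed
  qed
qed

lemma word_apply: "bij_betw g P {1..card P} \<Longrightarrow> x \<in> P \<Longrightarrow> word P \<omega> g (g x) = \<omega> x"
  by (simp add: word_def bij_betw_inv_into_left)

lemma word_eqD:
  assumes inj: "inj_on \<omega> P" and g: "bij_betw g P {1..card P}" and "i \<in> {1..card P}" "x \<in> P"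
    and "word P \<omega> g i = \<omega> x"
  shows "g x = i"
proof -
  have "inv_into P g i \<in> P" using assms(3) bij_betw_apply[OF bij_betw_inv_into[OF g]] by blast
  then have "inv_into P g i = x" using assms(4,5) inj by (auto simp: word_def dest: inj_onD)
  then show ?thesis using bij_betw_inv_into_right[OF g assms(3)] by simp
qed

lemma inj_on_word:
  assumes inj: "inj_on \<omega> P"
  shows "inj_on (word P \<omega>) {g. linear_extension le P g}"
proof (rule inj_onI, rule ext)
  fix g1 g2 x
  assume g1: "g1 \<in> {g. linear_extension le P g}" and g2: "g2 \<in> {g. linear_extension le P g}"
    and eq: "word P \<omega> g1 = word P \<omega> g2"
  have b1: "bij_betw g1 P {1..card P}" and b2: "bij_betw g2 P {1..card P}"
    using g1 g2 linear_extension_bij_betw by blast+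
  show "g1 x = g2 x"
  proof (cases "x \<in> P")
    case True
    then have "word P \<omega> g2 (g1 x) = \<omega> x" using word_apply[OF b1] eq by metis
    then show ?thesis using word_eqD[OF inj b2 bij_betw_apply[OF b1 True] True] by simp
  next
    case False
    then show ?thesis using g1 g2 by (simp add: linear_extension_def)
  qed
qed

lemma e_maj_eq_sum:
  assumes lp: "labeled_poset le P \<omega>" and s: "s \<in> P"
  shows "e_maj le P \<omega> s
    = (\<Sum>g\<in>{g. linear_extension le P g \<and> g s = card P}. fps_X ^ maj (card P) (word P \<omega> g))"
proof -
  let ?L = "{g. linear_extension le P g \<and> g s = card P}"
  have inj: "inj_on \<omega> P" using lp by (rule labeled_poset_inj_on)
  have "0 < card P" using s labeled_poset_finite[OF lp] card_gt_0_iff by blast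
  then have "card P \<in> {1..card P}" by simp
  then have "word P \<omega> g (card P) = \<omega> s \<longleftrightarrow> g s = card P" if "linear_extension le P g" for g
    using word_apply word_eqD[OF inj _ _ s] linear_extension_bij_betw[OF that] s by metis
  then have "{\<sigma>. \<exists>g. linear_extension le P g \<and> \<sigma> = word P \<omega> g} \<inter> {\<sigma>. \<sigma> (card P) = \<omega> s} = word P \<omega> ` ?L"
    by auto
  moreover have "inj_on (word P \<omega>) ?L"
    using inj_on_word[OF inj] by (rule inj_on_subset) blast
  ultimately show ?thesis by (simp add: e_maj_def sum.reindex)
qed

lemma s_partitions_eq_UN:
  assumes lp: "labeled_poset le P \<omega>" and s: "s \<in> P"
  shows "{f. P_omega_s_partition le P \<omega> s f \<and> sum f P = m}
    = (\<Union>g\<in>{g. linear_extension le P g \<and> g s = card P}. compatible_funs P \<omega> g m)"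
proof (intro equalityI subsetI)
  fix f assume "f \<in> {f. P_omega_s_partition le P \<omega> s f \<and> sum f P = m}"
  moreover have "\<forall>x. x \<notin> P \<longrightarrow> f x = 0" if "P_omega_s_partition le P \<omega> s f"
    using that by (simp add: P_omega_s_partition_def P_omega_partition_def)
  ultimately show "f \<in> (\<Union>g\<in>{g. linear_extension le P g \<and> g s = card P}. compatible_funs P \<omega> g m)"
    using s_partition_imp_compatible[OF lp s] by (auto simp: compatible_funs_def)
next
  fix f assume "f \<in> (\<Union>g\<in>{g. linear_extension le P g \<and> g s = card P}. compatible_funs P \<omega> g m)"
  then show "f \<in> {f. P_omega_s_partition le P \<omega> s f \<and> sum f P = m}"
    using compatible_imp_s_partition[OF _ s] by (auto simp: compatible_funs_def)
qed

lemma finite_linear_extensions: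
  assumes "finite P"
  shows "finite {g. linear_extension le P g}"
proof (rule finite_subset)
  show "{g. linear_extension le P g} \<subseteq> {g. \<forall>x. (x \<in> P \<longrightarrow> g x \<in> {1..card P}) \<and> (x \<notin> P \<longrightarrow> g x = 0)}"
    by (auto simp: linear_extension_def dest: bij_betwE)
  show "finite {g. \<forall>x. (x \<in> P \<longrightarrow> g x \<in> {1..card P}) \<and> (x \<notin> P \<longrightarrow> g x = 0)}"
    using assms by (intro finite_set_of_finite_funs) auto
qed

lemma compatible_funs_disjoint:
  assumes g1: "linear_extension le P g1" and g2: "linear_extension le P g2" and "g1 \<noteq> g2"
  shows "compatible_funs P \<omega> g1 m \<inter> compatible_funs P \<omega> g2 m = {}"
proof (rule ccontr)
  assume "compatible_funs P \<omega> g1 m \<inter> compatible_funs P \<omega> g2 m \<noteq> {}"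
  then obtain f where "compatible P \<omega> g1 f" "compatible P \<omega> g2 f"
    by (auto simp: compatible_funs_def)
  then have "g1 x = g2 x" for x
    using g1 g2 compatible_unique[of g1 P g2 \<omega> f x] linear_extension_bij_betw
    by (cases "x \<in> P") (auto simp: linear_extension_def)
  then show False using \<open>g1 \<noteq> g2\<close> by blast
qed

lemma G_fps_eq_sum:
  assumes lp: "labeled_poset le P \<omega>" and s: "s \<in> P"
  shows "G_fps le P \<omega> s = (\<Sum>g\<in>{g. linear_extension le P g \<and> g s = card P}.
    decr_seqs_fps (card P) (descents (card P) (word P \<omega> g)))"
proof (rule fps_ext)
  fix m
  let ?L = "{g. linear_extension le P g \<and> g s = card P}"
  have fin: "finite P" and inj: "inj_on \<omega> P"
    using lp by (simp_all add: labeled_poset_finite labeled_poset_inj_on)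
  have "finite ?L" using finite_linear_extensions[OF fin] by (rule finite_subset[rotated]) blast
  moreover have "finite (compatible_funs P \<omega> g m)" for g
    using finite_nat_funs_with_sum[OF fin, of m] by (rule finite_subset[rotated]) (auto simp: compatible_funs_def)
  moreover have "compatible_funs P \<omega> g1 m \<inter> compatible_funs P \<omega> g2 m = {}"
    if "g1 \<in> ?L" "g2 \<in> ?L" "g1 \<noteq> g2" for g1 g2
    using that by (intro compatible_funs_disjoint) auto
  ultimately have "card {f. P_omega_s_partition le P \<omega> s f \<and> sum f P = m}
      = (\<Sum>g\<in>?L. card (compatible_funs P \<omega> g m))"
    unfolding s_partitions_eq_UN[OF lp s] by (intro card_UN_disjoint) auto
  also have "\<dots> = (\<Sum>g\<in>?L. card (decr_seqs (card P) (descents (card P) (word P \<omega> g)) m))"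
    using bij_betw_same_card[OF bij_betw_seq_along[OF inj linear_extension_bij_betw]]
    by (intro sum.cong) auto
  finally show "G_fps le P \<omega> s $ m
      = (\<Sum>g\<in>?L. decr_seqs_fps (card P) (descents (card P) (word P \<omega> g))) $ m"
    by (simp add: G_fps_def decr_seqs_fps_def fps_sum_nth)
qed

lemma prod_one_minus_fps_X_power_nonzero: "(\<Prod>i=1..n. 1 - fps_X ^ i :: 'a::idom fps) \<noteq> 0"
proof -
  have "(1 - fps_X ^ i :: 'a fps) \<noteq> 0" if "i \<in> {1..n}" for i
  proof
    assume "1 - fps_X ^ i = (0 :: 'a fps)"
    then have "(1 - fps_X ^ i :: 'a fps) $ 0 = 0" by simp
    then show False using that by simp
  qed
  then show ?thesis by (simp add: prod_zero_iff)
qed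

theorem theorem3p3:
  fixes le :: "'a \<Rightarrow> 'a \<Rightarrow> bool" and P :: "'a set" and \<omega> :: "'a \<Rightarrow> nat" and s :: 'a
  assumes "labeled_poset le P \<omega>" and "s \<in> P"
  shows "G_fps le P \<omega> s = e_maj le P \<omega> s / (\<Prod>i=1..card P. (1 - fps_X ^ i))"
proof -
  let ?L = "{g. linear_extension le P g \<and> g s = card P}"
  let ?\<Pi> = "\<Prod>i=1..card P. (1 - fps_X ^ i) :: rat fps"
  have "G_fps le P \<omega> s * ?\<Pi>
      = (\<Sum>g\<in>?L. decr_seqs_fps (card P) (descents (card P) (word P \<omega> g)) * ?\<Pi>)"
    by (simp add: G_fps_eq_sum[OF assms] sum_distrib_right)
  also have "\<dots> = (\<Sum>g\<in>?L. fps_X ^ maj (card P) (word P \<omega> g))"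
    by (intro sum.cong refl decr_seqs_fps_times_prod[THEN trans])
      (auto simp: descents_def maj_eq_sum_descents)
  also have "\<dots> = e_maj le P \<omega> s" by (simp add: e_maj_eq_sum[OF assms])
  finally have "e_maj le P \<omega> s = G_fps le P \<omega> s * ?\<Pi>" by simp
  then show ?thesis by (simp only: fps_divide_times_eq[OF prod_one_minus_fps_X_power_nonzero])
qed

end
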